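(* Let $\widehat{V}_2(\mathbf{A};\mathbf{Y}) = \frac{\hat\sigma^2}{n}\Big[1+\frac1n\sum_{i=1}^n\sum_{j=1}^n\mathbf{A}_{ij}\Big]$, let $\mathbf{A}^m\in\mathcal{A}(\mathbf{Y})$ maximize $\mathbf{A}\mapsto\widehat{V}_2(\mathbf{A};\mathbf{Y})$ over $\mathcal{A}(\mathbf{Y})$, let $d_i'=\min\{d_i,n-1\}$ for $i=1,\dots,n$, and let \[\widehat{V}_2'(\mathbf{Y})=\frac{\hat\sigma^2}{n}\Big[1+\frac1n\sum_{i=1}^n d_i'\Big].\] Then $\widehat{V}_2(\mathbf{A}^\circ;\mathbf{Y})\le\widehat{V}_2(\mathbf{A}^m;\mathbf{Y})\le\widehat{V}_2'(\mathbf{Y})$, and $\widehat{V}_2(\mathbf{A}^m;\mathbf{Y})=\widehat{V}_2'(\mathbf{Y})$ whenever there exists a matrix $\mathbf{A}\in\mathcal{A}(\mathbf{Y})$ with $\sum_{j=1}^n\mathbf{A}_{ij}=d_i'$ for every $i$.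
   Context: Setting: $\mathcal{G}=(\mathcal{V},\mathcal{E})$ is a simple undirected graph with a real random variable $X_i$ attached to each vertex $i$. A subset $\mathcal{V}_S\subseteq\mathcal{V}$ with $|\mathcal{V}_S|=n$ is observed, labeled $1,\dots,n$. $\mathcal{G}_S=(\mathcal{V}_S,\mathcal{E}_S)$ is the subgraph of $\mathcal{G}$ induced by $\mathcal{V}_S$, with $n\times n$ adjacency matrix $\mathbf{A}^\circ$. $\mathcal{G}_R=(\mathcal{V}_S,\mathcal{E}_R)$ is a subgraph with $\mathcal{E}_R\subseteq\mathcal{E}_S$. For $i\in\mathcal{V}_S$, $d_i$ is the degree of $i$ in $\mathcal{G}$. Observed data: $\mathbf{Y}=((X_1,\dots,X_n),(d_1,\dots,d_n),\mathcal{G}_R)$. Let $\overline{X}=\frac1n\sum_i X_i$ and $\hat\sigma^2=\frac1n\sum_i(X_i-\overline{X})^2$. A binary symmetric $n\times n$ matrix $\mathbf{A}$ with zero diagonal is compatible with $\mathbf{Y}$ if $\mathbf{A}_{ij}=\mathbf{A}_{ji}=1$ for every $\{i,j\}\in\mathcal{E}_R$ and $\sum_j\mathbf{A}_{ij}\le d_i$ for every $i$; $\mathcal{A}(\mathbf{Y})$ is the set of compatible matrices (it contains $\mathbf{A}^\circ$). *)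

theory Defs
  imports Main "HOL.Real"
begin

text \<open>Observed vertices are labelled 1..n. Matrices are functions nat => nat => real,
  only their entries on {1..n} x {1..n} matter.\<close>

definition xbar :: "nat \<Rightarrow> (nat \<Rightarrow> real) \<Rightarrow> real" where
  "xbar n X = (1 / real n) * (\<Sum>i=1..n. X i)"

definition sigma_hat_sq :: "nat \<Rightarrow> (nat \<Rightarrow> real) \<Rightarrow> real" where
  "sigma_hat_sq n X = (1 / real n) * (\<Sum>i=1..n. (X i - xbar n X)^2)"

definition V2 :: "nat \<Rightarrow> (nat \<Rightarrow> real) \<Rightarrow> (nat \<Rightarrow> nat \<Rightarrow> real) \<Rightarrow> real" where
  "V2 n X A = sigma_hat_sq n X / real n *
      (1 + (1 / real n) * (\<Sum>i=1..n. \<Sum>j=1..n. A i j))"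

definition dprime :: "nat \<Rightarrow> (nat \<Rightarrow> nat) \<Rightarrow> nat \<Rightarrow> nat" where
  "dprime n d i = min (d i) (n - 1)"

definition V2' :: "nat \<Rightarrow> (nat \<Rightarrow> real) \<Rightarrow> (nat \<Rightarrow> nat) \<Rightarrow> real" where
  "V2' n X d = sigma_hat_sq n X / real n *
      (1 + (1 / real n) * (\<Sum>i=1..n. real (dprime n d i)))"

text \<open>Compatibility of a binary symmetric zero-diagonal n x n matrix with Y = (X, d, G_R);
  ER is the (symmetric) edge relation of G_R on labels 1..n.\<close>
definition compatible :: "nat \<Rightarrow> (nat \<Rightarrow> nat) \<Rightarrow> (nat \<Rightarrow> nat \<Rightarrow> bool)
    \<Rightarrow> (nat \<Rightarrow> nat \<Rightarrow> real) \<Rightarrow> bool" where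
  "compatible n d ER A \<longleftrightarrow>
     (\<forall>i\<in>{1..n}. \<forall>j\<in>{1..n}. A i j \<in> {0, 1} \<and> A i j = A j i) \<and>
     (\<forall>i\<in>{1..n}. A i i = 0) \<and>
     (\<forall>i\<in>{1..n}. \<forall>j\<in>{1..n}. ER i j \<longrightarrow> A i j = 1 \<and> A j i = 1) \<and>
     (\<forall>i\<in>{1..n}. (\<Sum>j=1..n. A i j) \<le> real (d i))"

definition induced_adj :: "('v \<Rightarrow> 'v \<Rightarrow> bool) \<Rightarrow> (nat \<Rightarrow> 'v) \<Rightarrow> nat \<Rightarrow> nat \<Rightarrow> real" where
  "induced_adj E s i j = (if E (s i) (s j) then 1 else 0)"

definition degree :: "'v set \<Rightarrow> ('v \<Rightarrow> 'v \<Rightarrow> bool) \<Rightarrow> 'v \<Rightarrow> nat" where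
  "degree V E v = card {w \<in> V. E v w}"

end

theory Submission
  imports Defs
begin

text \<open>Both estimators depend on a matrix only through its total entry sum, and \<open>V2\<close> is
  nondecreasing in that sum. A compatible matrix has 0/1 entries and a zero diagonal, so each
  row sum is at most both \<open>d\<^sub>i\<close> and \<open>n - 1\<close>, hence at most \<open>d\<^sub>i'\<close>; this bounds the maximum by
  \<open>V2'\<close>, and a compatible matrix attaining every \<open>d\<^sub>i'\<close> shows the bound is reached. The true
  induced adjacency matrix is itself compatible, which gives the lower bound.\<close>

lemma sigma_hat_sq_nonneg: "sigma_hat_sq n X \<ge> 0"
  unfolding sigma_hat_sq_def by (intro mult_nonneg_nonneg sum_nonneg) auto

lemma V2_le_V2'_if_row_sums_le:
  assumes "\<And>i. i \<in> {1..n} \<Longrightarrow> (\<Sum>j=1..n. A i j) \<le> real (dprime n d i)"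
  shows "V2 n X A \<le> V2' n X d"
proof -
  have "(\<Sum>i=1..n. \<Sum>j=1..n. A i j) \<le> (\<Sum>i=1..n. real (dprime n d i))"
    using assms by (rule sum_mono)
  then have "1 + (1 / real n) * (\<Sum>i=1..n. \<Sum>j=1..n. A i j)
      \<le> 1 + (1 / real n) * (\<Sum>i=1..n. real (dprime n d i))"
    by (intro add_left_mono mult_left_mono) auto
  then show ?thesis
    unfolding V2_def V2'_def
    by (intro mult_left_mono) (auto intro: divide_nonneg_nonneg sigma_hat_sq_nonneg)
qed

lemma V2_eq_V2'_if_row_sums_eq:
  assumes "\<forall>i\<in>{1..n}. (\<Sum>j=1..n. A i j) = real (dprime n d i)"
  shows "V2 n X A = V2' n X d"
proof -
  have "(\<Sum>i=1..n. \<Sum>j=1..n. A i j) = (\<Sum>i=1..n. real (dprime n d i))"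
    using assms by (intro sum.cong) auto
  then show ?thesis unfolding V2_def V2'_def by simp
qed

lemma row_sum_le_card_off_diagonal:
  assumes i: "i \<in> {1..n}"
    and binary: "\<And>j. j \<in> {1..n} \<Longrightarrow> A i j \<in> {0, 1}"
    and diag: "A i i = 0"
  shows "(\<Sum>j=1..n. A i j) \<le> real (n - 1)"
proof -
  have "(\<Sum>j=1..n. A i j) = A i i + (\<Sum>j\<in>{1..n}-{i}. A i j)"
    using i by (simp add: sum.remove)
  also have "\<dots> = (\<Sum>j\<in>{1..n}-{i}. A i j)"
    using diag by simp
  also have "\<dots> \<le> (\<Sum>j\<in>{1..n}-{i}. 1)"
  proof (rule sum_mono)
    fix j assume "j \<in> {1..n}-{i}"
    then show "A i j \<le> 1" using binary[of j] by auto
  qed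
  also have "\<dots> = real (n - 1)"
    using i by simp
  finally show ?thesis .
qed

lemma compatible_row_sum_le_dprime:
  assumes "compatible n d ER A" "i \<in> {1..n}"
  shows "(\<Sum>j=1..n. A i j) \<le> real (dprime n d i)"
proof -
  have "(\<Sum>j=1..n. A i j) \<le> real (d i)"
    using assms unfolding compatible_def by blast
  moreover have "(\<Sum>j=1..n. A i j) \<le> real (n - 1)"
    using assms by (intro row_sum_le_card_off_diagonal) (auto simp: compatible_def)
  ultimately show ?thesis
    unfolding dprime_def by (simp add: min_def)
qed

lemma compatible_V2_le_V2':
  assumes "compatible n d ER A"
  shows "V2 n X A \<le> V2' n X d"
  using compatible_row_sum_le_dprime[OF assms] by (rule V2_le_V2'_if_row_sums_le)

lemma induced_adj_row_sum_le_degree: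
  assumes s_in_V: "s ` {1..n} \<subseteq> V"
    and s_inj: "inj_on s {1..n}"
    and finite_nbhd: "finite {w \<in> V. E (s i) w}"
  shows "(\<Sum>j=1..n. induced_adj E s i j) \<le> real (degree V E (s i))"
proof -
  have "(\<Sum>j=1..n. induced_adj E s i j) = real (card {j\<in>{1..n}. E (s i) (s j)})"
    unfolding induced_adj_def by (simp add: sum.If_cases Int_def conj_commute)
  also have "card {j\<in>{1..n}. E (s i) (s j)} = card (s ` {j\<in>{1..n}. E (s i) (s j)})"
    by (rule card_image[symmetric]) (rule inj_on_subset[OF s_inj], auto)
  also have "\<dots> \<le> card {w \<in> V. E (s i) w}"
    using s_in_V by (intro card_mono[OF finite_nbhd]) auto
  finally show ?thesis
    unfolding degree_def by simp
qed

lemma induced_adj_compatible: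
  assumes E_sym: "\<And>u w. E u w \<Longrightarrow> E w u"
    and E_irrefl: "\<And>u. \<not> E u u"
    and s_in_V: "s ` {1..n} \<subseteq> V"
    and s_inj: "inj_on s {1..n}"
    and finite_nbhd: "\<And>i. i \<in> {1..n} \<Longrightarrow> finite {w \<in> V. E (s i) w}"
    and ER_sub: "\<And>i j. ER i j \<Longrightarrow> E (s i) (s j)"
  shows "compatible n (\<lambda>i. degree V E (s i)) ER (induced_adj E s)"
  unfolding compatible_def
proof (intro conjI ballI)
  fix i assume "i \<in> {1..n}"
  then show "(\<Sum>j=1..n. induced_adj E s i j) \<le> real (degree V E (s i))"
    using s_in_V s_inj finite_nbhd by (intro induced_adj_row_sum_le_degree)
qed (auto simp: induced_adj_def E_irrefl ER_sub dest: E_sym ER_sub)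

text \<open>The hypotheses \<open>E_in_V\<close>, \<open>ER_sym\<close> and \<open>ER_on\<close> are part of the model but not needed.\<close>

theorem lemma1:
  fixes V :: "'v set" and E :: "'v \<Rightarrow> 'v \<Rightarrow> bool"
    and n :: nat and s :: "nat \<Rightarrow> 'v"
    and X :: "nat \<Rightarrow> real" and ER :: "nat \<Rightarrow> nat \<Rightarrow> bool"
    and Am :: "nat \<Rightarrow> nat \<Rightarrow> real"
  assumes E_in_V: "\<And>u w. E u w \<Longrightarrow> u \<in> V \<and> w \<in> V"
    and E_sym: "\<And>u w. E u w \<Longrightarrow> E w u"
    and E_irrefl: "\<And>u. \<not> E u u"
    and s_in_V: "s ` {1..n} \<subseteq> V"
    and s_inj: "inj_on s {1..n}"
    and deg_fin: "\<And>i. i \<in> {1..n} \<Longrightarrow> finite {w \<in> V. E (s i) w}"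
    and ER_sym: "\<And>i j. ER i j \<Longrightarrow> ER j i"
    and ER_on: "\<And>i j. ER i j \<Longrightarrow> i \<in> {1..n} \<and> j \<in> {1..n}"
    and ER_sub: "\<And>i j. ER i j \<Longrightarrow> E (s i) (s j)"
    and Am_compat: "compatible n (\<lambda>i. degree V E (s i)) ER Am"
    and Am_max: "\<And>A. compatible n (\<lambda>i. degree V E (s i)) ER A \<Longrightarrow>
                   V2 n X A \<le> V2 n X Am"
  shows "V2 n X (induced_adj E s) \<le> V2 n X Am
       \<and> V2 n X Am \<le> V2' n X (\<lambda>i. degree V E (s i))
       \<and> ((\<exists>A. compatible n (\<lambda>i. degree V E (s i)) ER A \<and>
             (\<forall>i\<in>{1..n}. (\<Sum>j=1..n. A i j) = real (dprime n (\<lambda>i. degree V E (s i)) i)))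
          \<longrightarrow> V2 n X Am = V2' n X (\<lambda>i. degree V E (s i)))"
proof (intro conjI impI)
  show "V2 n X (induced_adj E s) \<le> V2 n X Am"
    using E_sym E_irrefl s_in_V s_inj deg_fin ER_sub
    by (intro Am_max induced_adj_compatible)
  show upper: "V2 n X Am \<le> V2' n X (\<lambda>i. degree V E (s i))"
    using Am_compat by (rule compatible_V2_le_V2')
  assume "\<exists>A. compatible n (\<lambda>i. degree V E (s i)) ER A \<and>
             (\<forall>i\<in>{1..n}. (\<Sum>j=1..n. A i j) = real (dprime n (\<lambda>i. degree V E (s i)) i))"
  then obtain A where A_compat: "compatible n (\<lambda>i. degree V E (s i)) ER A"
    and A_attains: "\<forall>i\<in>{1..n}. (\<Sum>j=1..n. A i j) = real (dprime n (\<lambda>i. degree V E (s i)) i)"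
    by blast
  have "V2' n X (\<lambda>i. degree V E (s i)) = V2 n X A"
    using A_attains by (rule V2_eq_V2'_if_row_sums_eq[symmetric])
  also have "\<dots> \<le> V2 n X Am"
    using A_compat by (rule Am_max)
  finally show "V2 n X Am = V2' n X (\<lambda>i. degree V E (s i))"
    using upper by linarith
qed

end
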